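(* Let $\varphi:\mathbb{R}_+\to[0,\infty)$ be a bounded decreasing function with $\|\varphi\|_1=\int_0^\infty\varphi(t)\,dt<\infty$. Then there exists a bounded, decreasing, convex $C^1$ function $m:[0,\infty)\to[0,\infty)$ with the following properties: - $m(0)\le4\|\varphi\|_1$; - for every $y>0$ the matrix $$\begin{pmatrix}2m(y)&2m'(y)\\2m'(y)&m''(y)\end{pmatrix}$$ is positive semidefinite (equivalently $2m'(y)^2\le m(y)m''(y)$; the condition is regarded as automatically satisfied if $m''(y)=\infty$); - $-m'(t)\ge\varphi(t)$ for all $t>0$. Moreover, $-m'(0_+)\le4\varphi(0_+)=4\lim_{t\to0_+}\varphi(t)$. *)

theory Defs
  imports "HOL-Analysis.Analysis"
begin

definition psd2 :: "real \<Rightarrow> real \<Rightarrow> real \<Rightarrow> bool" where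
  "psd2 a b c \<longleftrightarrow> (\<forall>u v. 0 \<le> a * u^2 + 2 * b * u * v + c * v^2)"

end

theory Submission
  imports Defs
begin

(*
  For a step profile phi = indicator (0, r] the function m_r y = 4 r^2 / (r + y) works: it is
  convex and decreasing, m_r 0 = 4 r, -m_r' = 4 r^2 / (r + y)^2 is at most 4 everywhere and at
  least 1 on (0, r], and
    2 m_r u^2 + 4 m_r' u v + m_r'' v^2 = 8 r^2 / (r + y)^3 ((r + y) u - v)^2 >= 0.
  A decreasing phi is a superposition of such steps: phi t is the measure of the levels
  l in (0, sup phi) with t <= rho l, where rho l is the length of the superlevel set {phi > l},
  and by the layer-cake formula rho integrates to ||phi||_1. So m = integral of m_(rho l) over
  the levels satisfies m 0 = 4 ||phi||_1, -m' 0 <= 4 sup phi and -m' t >= phi t, while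
  positivity, monotonicity, convexity and positive semidefiniteness survive the integration.
  Differentiating under the integral sign is justified by dominated convergence.
*)

section \<open>Integrals depending on a parameter\<close>

lemma tendsto_integral_at_within:
  fixes f :: "'b::first_countable_topology \<Rightarrow> 'a \<Rightarrow> 'c::{banach, second_countable_topology}"
  assumes meas: "\<And>x. x \<in> S \<Longrightarrow> x \<noteq> x0 \<Longrightarrow> f x \<in> borel_measurable M"
    and g_meas: "g \<in> borel_measurable M" and w_int: "integrable M w"
    and bound: "\<And>x l. x \<in> S \<Longrightarrow> x \<noteq> x0 \<Longrightarrow> l \<in> space M \<Longrightarrow> norm (f x l) \<le> w l"
    and lim: "\<And>l. l \<in> space M \<Longrightarrow> ((\<lambda>x. f x l) \<longlongrightarrow> g l) (at x0 within S)"
  shows "((\<lambda>x. \<integral>l. f x l \<partial>M) \<longlongrightarrow> (\<integral>l. g l \<partial>M)) (at x0 within S)"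
  unfolding tendsto_at_iff_sequentially comp_def
proof (intro allI impI)
  fix X :: "nat \<Rightarrow> 'b"
  assume X: "\<forall>i. X i \<in> S - {x0}" and "X \<longlonglongrightarrow> x0"
  then have X_lim: "filterlim X (at x0 within S) sequentially"
    by (auto simp: filterlim_at)
  show "(\<lambda>i. \<integral>l. f (X i) l \<partial>M) \<longlonglongrightarrow> (\<integral>l. g l \<partial>M)"
  proof (rule integral_dominated_convergence[where w=w])
    show "AE l in M. (\<lambda>i. f (X i) l) \<longlonglongrightarrow> g l"
      by (rule AE_I2, rule filterlim_compose[OF lim X_lim])
    show "AE l in M. norm (f (X i) l) \<le> w l" for i
      using X bound by auto
  qed (use X meas g_meas w_int in auto)
qed

lemma has_field_derivative_integral:
  fixes f f' :: "real \<Rightarrow> 'a \<Rightarrow> real"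
  assumes S: "convex S" "y \<in> S"
    and int: "\<And>x. x \<in> S \<Longrightarrow> integrable M (f x)"
    and f'_meas: "f' y \<in> borel_measurable M" and w_int: "integrable M w"
    and deriv: "\<And>x l. x \<in> S \<Longrightarrow> l \<in> space M \<Longrightarrow> ((\<lambda>x. f x l) has_field_derivative f' x l) (at x within S)"
    and bound: "\<And>x l. x \<in> S \<Longrightarrow> l \<in> space M \<Longrightarrow> \<bar>f' x l\<bar> \<le> w l"
  shows "((\<lambda>x. \<integral>l. f x l \<partial>M) has_field_derivative (\<integral>l. f' y l \<partial>M)) (at y within S)"
  unfolding has_field_derivative_iff
proof (rule Lim_transform_eventually)
  have quotient_bound: "\<bar>(f x l - f y l) / (x - y)\<bar> \<le> w l"
    if "x \<in> S" "x \<noteq> y" "l \<in> space M" for x l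
  proof -
    have "norm (f x l - f y l) \<le> w l * norm (x - y)"
      by (rule field_differentiable_bound[OF S(1)]) (use that deriv bound S(2) in auto)
    then show ?thesis
      using that by (simp add: divide_le_eq)
  qed
  show "((\<lambda>x. \<integral>l. (f x l - f y l) / (x - y) \<partial>M) \<longlongrightarrow> (\<integral>l. f' y l \<partial>M)) (at y within S)"
  proof (rule tendsto_integral_at_within[where w=w])
    show "(\<lambda>l. (f x l - f y l) / (x - y)) \<in> borel_measurable M" if "x \<in> S" for x
      using int[OF that] int[OF S(2)] by (intro borel_measurable_divide borel_measurable_diff) auto
    show "((\<lambda>x. (f x l - f y l) / (x - y)) \<longlongrightarrow> f' y l) (at y within S)" if "l \<in> space M" for l
      using deriv[OF S(2) that] by (simp add: has_field_derivative_iff)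
  qed (use quotient_bound f'_meas w_int in auto)
  show "\<forall>\<^sub>F x in at y within S.
      (\<integral>l. (f x l - f y l) / (x - y) \<partial>M) = ((\<integral>l. f x l \<partial>M) - (\<integral>l. f y l \<partial>M)) / (x - y)"
    unfolding eventually_at_filter
    by (intro always_eventually allI impI) (use int S(2) in simp)
qed

lemma convex_on_integral:
  fixes f :: "'b::real_vector \<Rightarrow> 'a \<Rightarrow> real"
  assumes "convex S"
    and int: "\<And>x. x \<in> S \<Longrightarrow> integrable M (f x)"
    and convex: "\<And>l. l \<in> space M \<Longrightarrow> convex_on S (\<lambda>x. f x l)"
  shows "convex_on S (\<lambda>x. \<integral>l. f x l \<partial>M)"
proof (rule convex_onI[OF _ \<open>convex S\<close>])
  fix t :: real and x y assume t: "0 < t" "t < 1" and xy: "x \<in> S" "y \<in> S"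
  then have z: "(1 - t) *\<^sub>R x + t *\<^sub>R y \<in> S"
    using \<open>convex S\<close> by (simp add: convex_def)
  have "f ((1 - t) *\<^sub>R x + t *\<^sub>R y) l \<le> (1 - t) * f x l + t * f y l" if "l \<in> space M" for l
    using convex_onD[OF convex[OF that]] t xy by simp
  then have "(\<integral>l. f ((1 - t) *\<^sub>R x + t *\<^sub>R y) l \<partial>M) \<le> (\<integral>l. (1 - t) * f x l + t * f y l \<partial>M)"
    using int[OF z] int[OF xy(1)] int[OF xy(2)] by (intro integral_mono) auto
  also have "\<dots> = (1 - t) * (\<integral>l. f x l \<partial>M) + t * (\<integral>l. f y l \<partial>M)"
    using int[OF xy(1)] int[OF xy(2)] by simp
  finally show "(\<integral>l. f ((1 - t) *\<^sub>R x + t *\<^sub>R y) l \<partial>M) \<le> (1 - t) * (\<integral>l. f x l \<partial>M) + t * (\<integral>l. f y l \<partial>M)" .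
qed

lemma psd2_integral:
  assumes "integrable M a" "integrable M b" "integrable M c"
    and "\<And>l. l \<in> space M \<Longrightarrow> psd2 (a l) (b l) (c l)"
  shows "psd2 (\<integral>l. a l \<partial>M) (\<integral>l. b l \<partial>M) (\<integral>l. c l \<partial>M)"
  unfolding psd2_def
proof (intro allI)
  fix u v :: real
  have "(\<integral>l. a l \<partial>M) * u^2 + 2 * (\<integral>l. b l \<partial>M) * u * v + (\<integral>l. c l \<partial>M) * v^2
      = (\<integral>l. a l * u^2 + 2 * b l * u * v + c l * v^2 \<partial>M)"
    using assms(1-3) by (simp add: algebra_simps)
  also have "\<dots> \<ge> 0"
    using assms(4) by (intro integral_nonneg_AE AE_I2) (simp add: psd2_def)
  finally show "0 \<le> (\<integral>l. a l \<partial>M) * u^2 + 2 * (\<integral>l. b l \<partial>M) * u * v + (\<integral>l. c l \<partial>M) * v^2" .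
qed

text \<open>No sign condition on \<open>f\<close> is needed: where \<open>f x \<le> 0\<close>, both \<open>ennreal (f x)\<close> and the
  measure of the levels \<open>l \<in> {0<..<f x}\<close> vanish.\<close>

lemma nn_integral_superlevel_emeasure:
  fixes f :: "'a \<Rightarrow> real"
  assumes "sigma_finite_measure M" and f[measurable]: "f \<in> borel_measurable M"
  shows "(\<integral>\<^sup>+l\<in>{0<..}. emeasure M {x \<in> space M. l < f x} \<partial>lborel) = (\<integral>\<^sup>+x. f x \<partial>M)"
proof -
  interpret pair_sigma_finite lborel M
    using assms(1) by (simp add: pair_sigma_finite_def lborel.sigma_finite_measure_axioms)
  define D where "D = {p \<in> space (lborel \<Otimes>\<^sub>M M). 0 < fst p \<and> fst p < f (snd p)}"
  have D[measurable]: "D \<in> sets (lborel \<Otimes>\<^sub>M M)"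
    unfolding D_def by measurable
  have "(\<integral>\<^sup>+l\<in>{0<..}. emeasure M {x \<in> space M. l < f x} \<partial>lborel)
      = (\<integral>\<^sup>+l. (\<integral>\<^sup>+x. indicator D (l, x) \<partial>M) \<partial>lborel)"
  proof (rule nn_integral_cong)
    fix l :: real
    have "indicator D (l, x) = indicator {x \<in> space M. l < f x} x * (indicator {0<..} l :: ennreal)"
      if "x \<in> space M" for x
      using that by (auto simp: D_def space_pair_measure indicator_def)
    then show "emeasure M {x \<in> space M. l < f x} * indicator {0<..} l = (\<integral>\<^sup>+x. indicator D (l, x) \<partial>M)"
      by (simp add: nn_integral_cong[of M "\<lambda>x. indicator D (l, x)"] nn_integral_multc)
  qed
  also have "\<dots> = (\<integral>\<^sup>+x. (\<integral>\<^sup>+l. indicator D (l, x) \<partial>lborel) \<partial>M)"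
    by (rule Fubini'[symmetric]) (simp add: case_prod_beta')
  also have "\<dots> = (\<integral>\<^sup>+x. f x \<partial>M)"
  proof (rule nn_integral_cong)
    fix x assume "x \<in> space M"
    then have "indicator D (l, x) = (indicator {0<..<f x} l :: ennreal)" for l
      by (auto simp: D_def space_pair_measure indicator_def)
    then show "(\<integral>\<^sup>+l. indicator D (l, x) \<partial>lborel) = ennreal (f x)"
      by (cases "0 \<le> f x") (auto simp: ennreal_neg)
  qed
  finally show ?thesis .
qed

section \<open>The majorant of a step profile\<close>

definition step_majorant :: "real \<Rightarrow> real \<Rightarrow> real" where
  "step_majorant r y = 4 * r^2 / (r + y)"

definition step_majorant' :: "real \<Rightarrow> real \<Rightarrow> real" where
  "step_majorant' r y = - 4 * r^2 / (r + y)^2"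

definition step_majorant'' :: "real \<Rightarrow> real \<Rightarrow> real" where
  "step_majorant'' r y = 8 * r^2 / (r + y)^3"

lemma step_majorant_at_0 [simp]: "step_majorant r 0 = 4 * r"
  by (cases "r = 0") (simp_all add: step_majorant_def power2_eq_square)

lemma step_majorant_nonneg: "0 \<le> r \<Longrightarrow> 0 \<le> y \<Longrightarrow> 0 \<le> step_majorant r y"
  by (simp add: step_majorant_def)

lemma step_majorant_le: "0 \<le> r \<Longrightarrow> 0 \<le> y \<Longrightarrow> step_majorant r y \<le> 4 * r"
  by (cases "r = 0") (simp_all add: step_majorant_def field_simps power2_eq_square)

lemma step_majorant_antimono:
  assumes "0 \<le> r" "0 \<le> s" "s \<le> t"
  shows "step_majorant r t \<le> step_majorant r s"
  using assms by (cases "r = 0") (auto simp: step_majorant_def intro!: divide_left_mono)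

lemma step_majorant'_nonpos: "step_majorant' r y \<le> 0"
  by (simp add: step_majorant'_def)

lemma abs_step_majorant'_le:
  assumes "0 \<le> r" "0 \<le> y"
  shows "\<bar>step_majorant' r y\<bar> \<le> 4"
proof (cases "r = 0")
  case False
  have "r^2 \<le> (r + y)^2"
    using assms by (intro power_mono) auto
  then show ?thesis
    using assms False by (simp add: step_majorant'_def field_simps)
qed (simp add: step_majorant'_def)

lemma step_majorant'_mono:
  assumes "0 \<le> r" "0 \<le> s" "s \<le> t"
  shows "step_majorant' r s \<le> step_majorant' r t"
proof (cases "r = 0")
  case False
  have "(r + s)^2 \<le> (r + t)^2"
    using assms by (intro power_mono) auto
  then show ?thesis
    using assms False by (simp add: step_majorant'_def divide_left_mono)
qed (simp add: step_majorant'_def)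

lemma step_majorant'_le_minus_one:
  assumes "0 < t" "t \<le> r"
  shows "step_majorant' r t \<le> -1"
proof -
  have "(r + t)^2 \<le> (2 * r)^2"
    using assms by (intro power_mono) auto
  then show ?thesis
    using assms by (simp add: step_majorant'_def power_mult_distrib)
qed

lemma abs_step_majorant''_le:
  assumes "0 \<le> r" "0 < y"
  shows "\<bar>step_majorant'' r y\<bar> \<le> 8 / y"
proof (cases "r = 0")
  case False
  have "(r / (r + y))^2 \<le> 1" "1 / (r + y) \<le> 1 / y"
    using assms by (simp_all add: power_le_one frac_le)
  then have "(r / (r + y))^2 * (1 / (r + y)) \<le> 1 * (1 / y)"
    using assms by (intro mult_mono) auto
  moreover have "step_majorant'' r y = 8 * ((r / (r + y))^2 * (1 / (r + y)))"
    using assms False by (simp add: step_majorant''_def field_simps power2_eq_square power3_eq_cube)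
  ultimately show ?thesis
    using assms by simp
qed (use assms in \<open>simp add: step_majorant''_def\<close>)

lemma has_real_derivative_step_majorant:
  assumes "0 \<le> r" "0 \<le> y"
  shows "(step_majorant r has_real_derivative step_majorant' r y) (at y)"
proof (cases "r = 0")
  case False
  then have "r + y \<noteq> 0"
    using assms by simp
  then show ?thesis
    unfolding step_majorant_def[abs_def] step_majorant'_def
    by (auto intro!: derivative_eq_intros simp: divide_simps power2_eq_square)
qed (simp add: step_majorant_def[abs_def] step_majorant'_def)

lemma has_real_derivative_step_majorant':
  assumes "0 \<le> r" "0 \<le> y"
  shows "(step_majorant' r has_real_derivative step_majorant'' r y) (at y)"
proof (cases "r = 0")
  case False
  then have "r + y \<noteq> 0"
    using assms by simp
  then show ?thesis
    unfolding step_majorant'_def[abs_def] step_majorant''_def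
    by (auto intro!: derivative_eq_intros simp: divide_simps power2_eq_square power3_eq_cube)
qed (simp add: step_majorant'_def[abs_def] step_majorant''_def)

lemma convex_on_step_majorant: "0 \<le> r \<Longrightarrow> convex_on {0..} (step_majorant r)"
  by (rule convex_on_realI[where f' = "step_majorant' r"])
     (auto intro: has_real_derivative_step_majorant step_majorant'_mono)

lemma psd2_step_majorant:
  assumes "0 \<le> r" "0 \<le> y"
  shows "psd2 (2 * step_majorant r y) (2 * step_majorant' r y) (step_majorant'' r y)"
  unfolding psd2_def
proof (intro allI)
  fix u v :: real
  show "0 \<le> 2 * step_majorant r y * u^2 + 2 * (2 * step_majorant' r y) * u * v + step_majorant'' r y * v^2"
  proof (cases "r = 0")
    case False
    then have "r + y \<noteq> 0"
      using assms by simp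
    then have "2 * step_majorant r y * u^2 + 2 * (2 * step_majorant' r y) * u * v + step_majorant'' r y * v^2
        = 8 * r^2 / (r + y)^3 * ((r + y) * u - v)^2"
      unfolding step_majorant_def step_majorant'_def step_majorant''_def
      by (simp add: divide_simps power2_eq_square power3_eq_cube) algebra
    then show ?thesis
      using assms by simp
  qed (simp add: step_majorant_def step_majorant'_def step_majorant''_def)
qed

section \<open>Superposition over the levels of a decreasing profile\<close>

locale bounded_decreasing_integrable =
  fixes \<phi> :: "real \<Rightarrow> real"
  assumes nonneg: "\<And>t. t > 0 \<Longrightarrow> 0 \<le> \<phi> t"
    and bounded: "\<exists>B. \<forall>t>0. \<phi> t \<le> B"
    and decreasing: "\<And>s t. 0 < s \<Longrightarrow> s \<le> t \<Longrightarrow> \<phi> t \<le> \<phi> s"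
    and integrable: "\<phi> integrable_on {0<..}"
begin

definition phi_sup :: real where
  "phi_sup = (SUP t\<in>{0<..}. \<phi> t)"

definition superlevel :: "real \<Rightarrow> real set" where
  "superlevel l = {t. 0 < t \<and> l < \<phi> t}"

definition superlevel_measure :: "real \<Rightarrow> real" where
  "superlevel_measure l = measure lborel (superlevel l)"

text \<open>Levels above \<open>phi_sup\<close> have empty superlevel sets; discarding them makes the measure
  finite, which is what bounds \<open>- majorant' 0\<close> by \<open>4 * phi_sup\<close>.\<close>

definition levels :: "real measure" where
  "levels = restrict_space lborel {0<..<phi_sup}"

lemma mem_superlevel [simp]: "t \<in> superlevel l \<longleftrightarrow> 0 < t \<and> l < \<phi> t"
  by (simp add: superlevel_def)

lemma le_phi_sup: "0 < t \<Longrightarrow> \<phi> t \<le> phi_sup"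
  unfolding phi_sup_def using bounded by (intro cSUP_upper) (auto simp: bdd_above_def)

lemma phi_sup_nonneg: "0 \<le> phi_sup"
  using le_phi_sup[of 1] nonneg[of 1] by simp

lemma phi_sup_le_limit:
  assumes "(\<phi> \<longlongrightarrow> L) (at_right 0)"
  shows "phi_sup \<le> L"
  unfolding phi_sup_def
proof (rule cSUP_least)
  fix t :: real assume "t \<in> {0<..}"
  then have "\<forall>\<^sub>F s in at_right 0. \<phi> t \<le> \<phi> s"
    using eventually_at_right_real[of 0 t] by (simp add: eventually_mono decreasing)
  then show "\<phi> t \<le> L"
    by (rule tendsto_lowerbound[OF assms]) simp
qed simp

lemma borel_measurable_phi_on_pos [measurable]:
  "(\<lambda>t. indicator {0<..} t * \<phi> t) \<in> borel_measurable borel"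
proof -
  have "mono_on {0<..} (\<lambda>t. - \<phi> t)"
    by (auto simp: mono_on_def intro: decreasing)
  then have "(\<lambda>t. - (- \<phi> t)) \<in> borel_measurable (restrict_space borel {0<..})"
    by (intro borel_measurable_uminus borel_measurable_mono_on_fnc)
  then show ?thesis
    by (subst (asm) borel_measurable_restrict_space_iff) auto
qed

lemma sets_superlevel [measurable]: "superlevel l \<in> sets borel"
proof -
  have "superlevel l = {t. 0 < t \<and> l < indicator {0<..} t * \<phi> t}"
    by (auto simp: indicator_def)
  also have "\<dots> \<in> sets borel"
    by measurable
  finally show ?thesis .
qed

lemma nn_integral_superlevel_emeasure_phi:
  "(\<integral>\<^sup>+l\<in>{0<..}. emeasure lborel (superlevel l) \<partial>lborel) = integral {0<..} \<phi>"
proof -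
  have "(\<integral>\<^sup>+l\<in>{0<..}. emeasure lborel (superlevel l) \<partial>lborel)
      = (\<integral>\<^sup>+l\<in>{0<..}. emeasure lborel {t \<in> space lborel. l < indicator {0<..} t * \<phi> t} \<partial>lborel)"
    by (rule set_nn_integral_cong) (auto intro!: arg_cong[where f = "emeasure lborel"] simp: indicator_def)
  also have "\<dots> = (\<integral>\<^sup>+t. indicator {0<..} t * \<phi> t \<partial>lborel)"
    using borel_measurable_phi_on_pos[folded measurable_lborel2]
    by (rule nn_integral_superlevel_emeasure[OF lborel.sigma_finite_measure_axioms])
  also have "\<dots> = (\<integral>\<^sup>+t\<in>{0<..}. \<phi> t \<partial>lborel)"
    by (intro nn_integral_cong) (auto simp: indicator_def)
  also have "\<dots> = integral {0<..} \<phi>"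
    using nonneg integrable by (intro nn_integral_has_integral_lebesgue') auto
  finally show ?thesis .
qed

lemma emeasure_superlevel_finite:
  assumes "0 < l"
  shows "emeasure lborel (superlevel l) < \<infinity>"
proof -
  have "emeasure lborel (superlevel l) * ennreal l
      = (\<integral>\<^sup>+l'. emeasure lborel (superlevel l) * indicator {0<..<l} l' \<partial>lborel)"
    using assms by (simp add: nn_integral_cmult_indicator)
  also have "\<dots> \<le> (\<integral>\<^sup>+l'\<in>{0<..}. emeasure lborel (superlevel l') \<partial>lborel)"
    by (intro nn_integral_mono) (auto simp: indicator_def intro!: emeasure_mono)
  also have "\<dots> < \<infinity>"
    by (simp add: nn_integral_superlevel_emeasure_phi)
  finally show ?thesis
    using assms by (auto simp: ennreal_mult_less_top)
qed

lemma emeasure_superlevel: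
  assumes "0 < l"
  shows "emeasure lborel (superlevel l) = superlevel_measure l"
  unfolding superlevel_measure_def
  using emeasure_superlevel_finite[OF assms] by (intro emeasure_eq_ennreal_measure) simp

lemma superlevel_measure_nonneg: "0 \<le> superlevel_measure l"
  by (simp add: superlevel_measure_def)

lemma superlevel_measure_antimono:
  assumes "0 < l" "l \<le> l'"
  shows "superlevel_measure l' \<le> superlevel_measure l"
proof -
  have "emeasure lborel (superlevel l') \<le> emeasure lborel (superlevel l)"
    using assms by (intro emeasure_mono) auto
  then show ?thesis
    using assms by (simp add: emeasure_superlevel superlevel_measure_nonneg)
qed

lemma le_superlevel_measure:
  assumes "0 < t" "0 < l" "l < \<phi> t"
  shows "t \<le> superlevel_measure l"
proof -
  have "{0<..t} \<subseteq> superlevel l"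
    using assms decreasing by force
  then have "emeasure lborel {0<..t} \<le> emeasure lborel (superlevel l)"
    by (intro emeasure_mono) auto
  then show ?thesis
    using assms by (simp add: emeasure_superlevel superlevel_measure_nonneg)
qed

lemma space_levels [simp]: "space levels = {0<..<phi_sup}"
  by (simp add: levels_def space_restrict_space)

lemma finite_measure_levels: "finite_measure levels"
  unfolding levels_def using phi_sup_nonneg
  by (intro finite_measureI) (simp add: emeasure_restrict_space)

lemma measure_levels: "measure levels (space levels) = phi_sup"
  unfolding levels_def using phi_sup_nonneg by (simp add: measure_restrict_space)

lemma borel_measurable_superlevel_measure [measurable]: "superlevel_measure \<in> borel_measurable levels"
proof -
  have "mono_on {0<..<phi_sup} (\<lambda>l. - superlevel_measure l)"
    by (auto simp: mono_on_def intro: superlevel_measure_antimono)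
  then have "(\<lambda>l. - (- superlevel_measure l)) \<in> borel_measurable (restrict_space borel {0<..<phi_sup})"
    by (intro borel_measurable_uminus borel_measurable_mono_on_fnc)
  then show ?thesis
    by (simp add: levels_def measurable_cong_sets[OF sets_restrict_space_cong[OF sets_lborel] refl])
qed

lemma nn_integral_superlevel_measure_le: "(\<integral>\<^sup>+l. superlevel_measure l \<partial>levels) \<le> integral {0<..} \<phi>"
proof -
  have "(\<integral>\<^sup>+l. superlevel_measure l \<partial>levels) = (\<integral>\<^sup>+l\<in>{0<..<phi_sup}. superlevel_measure l \<partial>lborel)"
    by (simp add: levels_def nn_integral_restrict_space)
  also have "\<dots> \<le> (\<integral>\<^sup>+l\<in>{0<..}. emeasure lborel (superlevel l) \<partial>lborel)"
    by (intro nn_integral_mono) (auto simp: indicator_def emeasure_superlevel)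
  finally show ?thesis
    by (simp add: nn_integral_superlevel_emeasure_phi)
qed

lemma integrable_superlevel_measure: "integrable levels superlevel_measure"
  using nn_integral_superlevel_measure_le superlevel_measure_nonneg
  by (intro integrableI_nonneg) (auto simp: order.strict_trans1)

lemma integral_superlevel_measure_le: "(\<integral>l. superlevel_measure l \<partial>levels) \<le> integral {0<..} \<phi>"
proof -
  have "ennreal (\<integral>l. superlevel_measure l \<partial>levels) \<le> integral {0<..} \<phi>"
    using integrable_superlevel_measure superlevel_measure_nonneg nn_integral_superlevel_measure_le
    by (simp add: nn_integral_eq_integral[symmetric])
  moreover have "0 \<le> integral {0<..} \<phi>"
    using nonneg by (intro integral_nonneg[OF integrable]) auto
  ultimately show ?thesis
    by simp
qed


definition majorant :: "real \<Rightarrow> real" where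
  "majorant y = (\<integral>l. step_majorant (superlevel_measure l) y \<partial>levels)"

definition majorant' :: "real \<Rightarrow> real" where
  "majorant' y = (\<integral>l. step_majorant' (superlevel_measure l) y \<partial>levels)"

definition majorant'' :: "real \<Rightarrow> real" where
  "majorant'' y = (\<integral>l. step_majorant'' (superlevel_measure l) y \<partial>levels)"

lemma integrable_levels_const [simp]: "integrable levels (\<lambda>_. c)"
  using finite_measure_levels by (rule finite_measure.integrable_const)

lemma integrable_levels_bounded:
  fixes f :: "real \<Rightarrow> real"
  assumes "f \<in> borel_measurable levels" "\<And>l. l \<in> space levels \<Longrightarrow> \<bar>f l\<bar> \<le> c"
  shows "integrable levels f"
  using assms by (intro finite_measure.integrable_const_bound[OF finite_measure_levels, where B = c]) auto

lemma integrable_step_majorant: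
  assumes "0 \<le> y"
  shows "integrable levels (\<lambda>l. step_majorant (superlevel_measure l) y)"
proof (rule Bochner_Integration.integrable_bound)
  show "integrable levels (\<lambda>l. 4 * superlevel_measure l)"
    using integrable_superlevel_measure by simp
  show "(\<lambda>l. step_majorant (superlevel_measure l) y) \<in> borel_measurable levels"
    unfolding step_majorant_def by measurable
  show "AE l in levels. norm (step_majorant (superlevel_measure l) y) \<le> norm (4 * superlevel_measure l)"
    using assms superlevel_measure_nonneg step_majorant_le step_majorant_nonneg by auto
qed

lemma integrable_step_majorant':
  "0 \<le> y \<Longrightarrow> integrable levels (\<lambda>l. step_majorant' (superlevel_measure l) y)"
  using abs_step_majorant'_le superlevel_measure_nonneg
  by (intro integrable_levels_bounded[where c = 4]) (auto simp: step_majorant'_def)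

lemma integrable_step_majorant'':
  "0 < y \<Longrightarrow> integrable levels (\<lambda>l. step_majorant'' (superlevel_measure l) y)"
  using abs_step_majorant''_le superlevel_measure_nonneg
  by (intro integrable_levels_bounded[where c = "8 / y"]) (auto simp: step_majorant''_def)

lemma majorant_nonneg: "0 \<le> y \<Longrightarrow> 0 \<le> majorant y"
  unfolding majorant_def using step_majorant_nonneg superlevel_measure_nonneg
  by (intro integral_nonneg_AE AE_I2) auto

lemma majorant_antimono:
  assumes "0 \<le> s" "s \<le> t"
  shows "majorant t \<le> majorant s"
  unfolding majorant_def
proof (rule integral_mono)
  show "step_majorant (superlevel_measure l) t \<le> step_majorant (superlevel_measure l) s" for l
    using superlevel_measure_nonneg assms by (rule step_majorant_antimono)
qed (use assms integrable_step_majorant in simp_all)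

lemma majorant_0_le: "majorant 0 \<le> 4 * integral {0<..} \<phi>"
  using integral_superlevel_measure_le by (simp add: majorant_def)

lemma convex_on_majorant: "convex_on {0..} majorant"
  unfolding majorant_def[abs_def]
proof (rule convex_on_integral)
  show "convex_on {0..} (\<lambda>y. step_majorant (superlevel_measure l) y)" for l
    using superlevel_measure_nonneg by (rule convex_on_step_majorant)
qed (simp_all add: integrable_step_majorant)

lemma has_real_derivative_majorant:
  assumes "0 \<le> y"
  shows "(majorant has_real_derivative majorant' y) (at y within {0..})"
  unfolding majorant_def[abs_def] majorant'_def
proof (rule has_field_derivative_integral[where w = "\<lambda>_. 4"])
  show "((\<lambda>x. step_majorant (superlevel_measure l) x) has_real_derivative
      step_majorant' (superlevel_measure l) x) (at x within {0..})" if "x \<in> {0..}" for x l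
    using has_real_derivative_step_majorant[OF superlevel_measure_nonneg] that
    by (simp add: has_field_derivative_at_within)
  show "\<bar>step_majorant' (superlevel_measure l) x\<bar> \<le> 4" if "x \<in> {0..}" for x l
    using superlevel_measure_nonneg that by (simp add: abs_step_majorant'_le)
  show "(\<lambda>l. step_majorant' (superlevel_measure l) y) \<in> borel_measurable levels"
    using integrable_step_majorant'[OF assms] by (rule borel_measurable_integrable)
qed (use assms integrable_step_majorant in simp_all)

lemma continuous_on_majorant': "continuous_on {0..} majorant'"
  unfolding continuous_on_def
proof
  fix y :: real assume y: "y \<in> {0..}"
  show "(majorant' \<longlongrightarrow> majorant' y) (at y within {0..})"
    unfolding majorant'_def
  proof (rule tendsto_integral_at_within[where w = "\<lambda>_. 4"])
    show "((\<lambda>x. step_majorant' (superlevel_measure l) x) \<longlongrightarrow> step_majorant' (superlevel_measure l) y)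
        (at y within {0..})" for l
      using y continuous_at_imp_continuous_at_within[OF
          DERIV_isCont[OF has_real_derivative_step_majorant'[OF superlevel_measure_nonneg]]]
      by (simp add: continuous_within)
    show "(\<lambda>l. step_majorant' (superlevel_measure l) x) \<in> borel_measurable levels" for x
      unfolding step_majorant'_def by measurable
    then show "(\<lambda>l. step_majorant' (superlevel_measure l) y) \<in> borel_measurable levels" .
    show "norm (step_majorant' (superlevel_measure l) x) \<le> 4" if "x \<in> {0..}" for x l
      using superlevel_measure_nonneg that by (simp add: abs_step_majorant'_le)
  qed simp
qed

lemma has_real_derivative_majorant':
  assumes "0 < y"
  shows "(majorant' has_real_derivative majorant'' y) (at y)"
proof -
  \<comment> \<open>On \<open>{y/2<..}\<close> the bound \<open>8 / x\<close> on \<open>step_majorant''\<close> is uniform.\<close>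
  have "(majorant' has_real_derivative majorant'' y) (at y within {y/2<..})"
    unfolding majorant'_def[abs_def] majorant''_def
  proof (rule has_field_derivative_integral[where w = "\<lambda>_. 16 / y"])
    show "\<bar>step_majorant'' (superlevel_measure l) x\<bar> \<le> 16 / y" if "x \<in> {y/2<..}" for x l
    proof -
      have "8 / x \<le> 16 / y"
        using that assms by (simp add: divide_simps)
      then show ?thesis
        using abs_step_majorant''_le[OF superlevel_measure_nonneg, of x l] that assms by simp
    qed
    show "((\<lambda>x. step_majorant' (superlevel_measure l) x) has_real_derivative
        step_majorant'' (superlevel_measure l) x) (at x within {y/2<..})" if "x \<in> {y/2<..}" for x l
      using has_real_derivative_step_majorant'[OF superlevel_measure_nonneg, of x] that assms
      by (simp add: has_field_derivative_at_within)
    show "(\<lambda>l. step_majorant'' (superlevel_measure l) y) \<in> borel_measurable levels"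
      using integrable_step_majorant''[OF assms] by (rule borel_measurable_integrable)
  qed (use assms integrable_step_majorant' in simp_all)
  moreover have "at y within {y/2<..} = at y"
    using assms by (intro at_within_open) auto
  ultimately show ?thesis
    by simp
qed

lemma psd2_majorant:
  assumes "0 < y"
  shows "psd2 (2 * majorant y) (2 * majorant' y) (majorant'' y)"
proof -
  have "psd2 (\<integral>l. 2 * step_majorant (superlevel_measure l) y \<partial>levels)
      (\<integral>l. 2 * step_majorant' (superlevel_measure l) y \<partial>levels)
      (\<integral>l. step_majorant'' (superlevel_measure l) y \<partial>levels)"
  proof (rule psd2_integral)
    show "psd2 (2 * step_majorant (superlevel_measure l) y) (2 * step_majorant' (superlevel_measure l) y)
        (step_majorant'' (superlevel_measure l) y)" for l
      using assms by (intro psd2_step_majorant superlevel_measure_nonneg) simp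
  qed (use assms integrable_step_majorant integrable_step_majorant' integrable_step_majorant'' in simp_all)
  then show ?thesis
    by (simp add: majorant_def majorant'_def majorant''_def)
qed

lemma phi_le_neg_majorant':
  assumes "0 < t"
  shows "\<phi> t \<le> - majorant' t"
proof -
  have "\<phi> t = (\<integral>l. indicator {0<..<\<phi> t} l \<partial>levels)"
    using nonneg[OF assms] le_phi_sup[OF assms]
    by (simp add: levels_def measure_restrict_space Int_absorb2 subset_eq)
  also have "\<dots> \<le> (\<integral>l. - step_majorant' (superlevel_measure l) t \<partial>levels)"
  proof (rule integral_mono)
    show "integrable levels (indicat_real {0<..<\<phi> t})"
      by (intro integrable_levels_bounded[where c = 1])
        (auto simp: levels_def intro!: measurable_restrict_space1)
    show "indicator {0<..<\<phi> t} l \<le> - step_majorant' (superlevel_measure l) t" if "l \<in> space levels" for l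
      using that step_majorant'_le_minus_one[OF assms le_superlevel_measure[OF assms]]
        step_majorant'_nonpos by (auto simp: indicator_def)
  qed (use assms integrable_step_majorant' in simp)
  finally show ?thesis
    by (simp add: majorant'_def)
qed

lemma neg_majorant'_0_le_limit:
  assumes "(\<phi> \<longlongrightarrow> L) (at_right 0)"
  shows "- majorant' 0 \<le> 4 * L"
proof -
  have "- majorant' 0 = (\<integral>l. - step_majorant' (superlevel_measure l) 0 \<partial>levels)"
    by (simp add: majorant'_def)
  also have "\<dots> \<le> (\<integral>l. 4 \<partial>levels)"
    using abs_step_majorant'_le[OF superlevel_measure_nonneg, of 0] integrable_step_majorant'[of 0]
    by (intro integral_mono) (auto simp: abs_le_iff)
  also have "\<dots> = 4 * phi_sup"
    using measure_levels by simp
  also have "\<dots> \<le> 4 * L"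
    using phi_sup_le_limit[OF assms] by simp
  finally show ?thesis .
qed

end

theorem lemma4p3:
  fixes \<phi> :: "real \<Rightarrow> real"
  assumes nonneg: "\<And>t. t > 0 \<Longrightarrow> 0 \<le> \<phi> t"
    and bounded: "\<exists>B. \<forall>t>0. \<phi> t \<le> B"
    and decreasing: "\<And>s t. 0 < s \<Longrightarrow> s \<le> t \<Longrightarrow> \<phi> t \<le> \<phi> s"
    and integrable: "\<phi> integrable_on {0<..}"
  shows "\<exists>m m' :: real \<Rightarrow> real.
    (\<forall>t\<ge>0. 0 \<le> m t) \<and>
    (\<exists>B. \<forall>t\<ge>0. m t \<le> B) \<and>
    (\<forall>s t. 0 \<le> s \<longrightarrow> s \<le> t \<longrightarrow> m t \<le> m s) \<and>
    convex_on {0..} m \<and>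
    (\<forall>t\<ge>0. (m has_real_derivative m' t) (at t within {0..})) \<and>
    continuous_on {0..} m' \<and>
    m 0 \<le> 4 * integral {0<..} \<phi> \<and>
    (\<forall>y>0. (\<exists>m2. (m' has_real_derivative m2) (at y) \<and> psd2 (2 * m y) (2 * m' y) m2)
           \<or> filterlim (\<lambda>x. (m' x - m' y) / (x - y)) at_top (at y)) \<and>
    (\<forall>t>0. \<phi> t \<le> - m' t) \<and>
    (\<forall>L. (\<phi> \<longlongrightarrow> L) (at_right 0) \<longrightarrow> - m' 0 \<le> 4 * L)"
proof -
  interpret bounded_decreasing_integrable \<phi>
    by unfold_locales (fact nonneg bounded decreasing integrable)+
  show ?thesis
  proof (rule exI[of _ majorant], rule exI[of _ majorant'], intro conjI)
    show "\<forall>t\<ge>0. 0 \<le> majorant t"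
      using majorant_nonneg by blast
    show "\<forall>s t. 0 \<le> s \<longrightarrow> s \<le> t \<longrightarrow> majorant t \<le> majorant s"
      using majorant_antimono by blast
    then show "\<exists>B. \<forall>t\<ge>0. majorant t \<le> B"
      by blast
    show "\<forall>t\<ge>0. (majorant has_real_derivative majorant' t) (at t within {0..})"
      using has_real_derivative_majorant by blast
    show "\<forall>y>0. (\<exists>m2. (majorant' has_real_derivative m2) (at y) \<and> psd2 (2 * majorant y) (2 * majorant' y) m2)
        \<or> filterlim (\<lambda>x. (majorant' x - majorant' y) / (x - y)) at_top (at y)"
      using has_real_derivative_majorant' psd2_majorant by blast
    show "\<forall>t>0. \<phi> t \<le> - majorant' t"
      using phi_le_neg_majorant' by blast
    show "\<forall>L. (\<phi> \<longlongrightarrow> L) (at_right 0) \<longrightarrow> - majorant' 0 \<le> 4 * L"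
      using neg_majorant'_0_le_limit by blast
  qed (fact convex_on_majorant continuous_on_majorant' majorant_0_le)+
qed

end
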